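(* Let $p,q,r$ be positive integers with $\frac1p+\frac1q+\frac1r\le1$, $M=\max\{p,q,r\}$, and $f(x,y,z)=x^p+y^q+z^r+axyz$ on $\mathbb C^3$, where $a$ is a positive real number. For $\varepsilon>0$ and $t\in\mathbb C$ let $V_a(\varepsilon,t)=f^{-1}(t)\cap D^6_\varepsilon$, where $D^6_\varepsilon$ is the closed ball of radius $\varepsilon$ centered at the origin. If $a>12M$ and $0<|t|<1$, then $V_a(1,t)$ is a Milnor fiber of $f$.
   Context: The Milnor radius $\varepsilon_f$ of $f$ is the supremum of $\varepsilon$ such that every sphere $S^5_\rho$ ($0<\rho\le\varepsilon$) centered at the origin is transverse to $f^{-1}(0)$. A Milnor fiber of $f$ is a set $f^{-1}(\delta e^{i\theta})\cap D^6_\varepsilon$ where $\varepsilon<\varepsilon_f$ and $\delta>0$ is such that $f^{-1}(s)$ meets $S^5_\varepsilon$ transversally for all $0\le|s|\le\delta$. *)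

theory Defs
  imports "HOL-Analysis.Analysis"
begin

text \<open>We identify \<open>\<complex>\<^sup>3\<close> with \<open>complex ^ 3\<close>, which as a real inner product space is
  Euclidean \<open>\<real>\<^sup>6\<close>.  \<open>D\<^sup>6_\<epsilon>\<close> is \<open>cball 0 \<epsilon>\<close> and \<open>S\<^sup>5_\<rho>\<close> is \<open>sphere 0 \<rho>\<close>.\<close>

text \<open>The level set \<open>f\<^sup>-\<^sup>1(s)\<close> meets the sphere \<open>S_\<rho>\<close> (= level set of \<open>|x|\<^sup>2\<close>) transversally
  at \<open>x\<close>: \<open>f\<close> is (real) differentiable at \<open>x\<close> and the combined real derivative
  \<open>v \<mapsto> (f' v, x \<bullet> v)\<close> of \<open>(f, |.|\<^sup>2/2)\<close> is surjective onto \<open>\<complex> \<times> \<real>\<close>.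
  (In particular a singular point of \<open>f\<close> is never transverse.)\<close>
definition transversal_at :: "(complex^3 \<Rightarrow> complex) \<Rightarrow> complex^3 \<Rightarrow> bool" where
  "transversal_at f x \<longleftrightarrow>
     (\<exists>f'. (f has_derivative f') (at x) \<and> (\<forall>w c. \<exists>v. f' v = w \<and> inner x v = c))"

definition sphere_transverse :: "(complex^3 \<Rightarrow> complex) \<Rightarrow> complex \<Rightarrow> real \<Rightarrow> bool" where
  "sphere_transverse f s \<rho> \<longleftrightarrow> (\<forall>x \<in> f -` {s} \<inter> sphere 0 \<rho>. transversal_at f x)"

definition milnor_radius :: "(complex^3 \<Rightarrow> complex) \<Rightarrow> ereal" where
  "milnor_radius f = (SUP \<epsilon> \<in> {\<epsilon>. \<epsilon> > 0 \<and> (\<forall>\<rho>. 0 < \<rho> \<and> \<rho> \<le> \<epsilon> \<longrightarrow> sphere_transverse f 0 \<rho>)}. ereal \<epsilon>)"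

definition is_milnor_fiber :: "(complex^3 \<Rightarrow> complex) \<Rightarrow> (complex^3) set \<Rightarrow> bool" where
  "is_milnor_fiber f F \<longleftrightarrow>
     (\<exists>\<epsilon> \<delta> \<theta>. 0 < \<epsilon> \<and> ereal \<epsilon> < milnor_radius f \<and> 0 < \<delta> \<and>
        (\<forall>s. cmod s \<le> \<delta> \<longrightarrow> sphere_transverse f s \<epsilon>) \<and>
        F = f -` {complex_of_real \<delta> * cis \<theta>} \<inter> cball 0 \<epsilon>)"

end

theory Submission
  imports Defs
begin

text \<open>Transversality of a fiber \<open>f = s\<close> and a sphere fails at \<open>x \<noteq> 0\<close> only if the complex
  gradient of \<open>f\<close> equals \<open>l \<cdot> cnj x\<close> for some \<open>l\<close>. If a coordinate of such an \<open>x\<close> vanishes, a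
  second one does too, and \<open>f\<close> is a single monomial there. Otherwise multiplying the \<open>i\<close>-th
  equation by \<open>x\<^sub>i\<close> gives \<open>p\<^sub>i x\<^sub>i^p\<^sub>i + u = l |x\<^sub>i|\<^sup>2\<close> with \<open>u = a x\<^sub>1 x\<^sub>2 x\<^sub>3\<close>, and
  the weighted sum of these yields \<open>f = l T + (1 - \<Sum> 1/p\<^sub>i) u\<close> with \<open>T = \<Sum> |x\<^sub>i|\<^sup>2/p\<^sub>i\<close>.

  On \<open>f = 0\<close> this forces \<open>|u| \<le> p\<^sub>i |x\<^sub>i|^p\<^sub>i\<close>, so each \<open>|x\<^sub>i|^p\<^sub>i\<close> exceeds
  \<open>12 |x\<^sub>1 x\<^sub>2 x\<^sub>3|\<close>, which contradicts \<open>\<Sum> 1/p\<^sub>i \<le> 1\<close> once \<open>|x\<^sub>1 x\<^sub>2 x\<^sub>3| \<le> 1\<close>, e.g. for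
  \<open>|x| \<le> 6/5\<close>; so the Milnor radius is at least \<open>6/5\<close>. On the unit sphere the residuals
  \<open>|l |x\<^sub>i|\<^sup>2 - u| = p\<^sub>i |x\<^sub>i|^p\<^sub>i \<le> M |x\<^sub>i|\<^sup>2\<close> are small compared with \<open>|u|\<close>, so the
  \<open>|x\<^sub>i|\<^sup>2\<close> differ by less than \<open>1/6\<close>, the smallest \<open>|x\<^sub>i|\<close> exceeds \<open>1/3\<close>, and then
  \<open>|f x| \<ge> T (a min |x\<^sub>i| - M) \<ge> 3\<close>.\<close>

lemma milnor_radius_ge:
  assumes "\<epsilon> > 0" and "\<And>\<rho>. 0 < \<rho> \<Longrightarrow> \<rho> \<le> \<epsilon> \<Longrightarrow> sphere_transverse f 0 \<rho>"
  shows "ereal \<epsilon> \<le> milnor_radius f"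
  unfolding milnor_radius_def by (rule SUP_upper) (use assms in auto)

lemma is_milnor_fiber_level_set:
  assumes "0 < \<epsilon>" "ereal \<epsilon> < milnor_radius f" "t \<noteq> 0"
    and "\<And>s. cmod s \<le> cmod t \<Longrightarrow> sphere_transverse f s \<epsilon>"
  shows "is_milnor_fiber f (f -` {t} \<inter> cball 0 \<epsilon>)"
proof -
  have "complex_of_real (cmod t) * cis (Arg t) = t"
    using rcis_cmod_Arg[of t] by (simp add: rcis_def)
  then show ?thesis
    unfolding is_milnor_fiber_def using assms
    by (intro exI[of _ \<epsilon>] exI[of _ "cmod t"] exI[of _ "Arg t"]) auto
qed

lemma norm_vec3_square:
  "(norm (x::complex^3))^2 = (cmod (x$1))^2 + (cmod (x$2))^2 + (cmod (x$3))^2"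
  by (simp add: norm_vec_def L2_set_def sum_3)

lemma inner_vec3:
  "inner (x::complex^3) v = Re (cnj (x$1) * v$1 + cnj (x$2) * v$2 + cnj (x$3) * v$3)"
  by (simp add: inner_vec_def sum_3 inner_complex_def)

lemma decompose_along_conj:
  fixes x :: "complex^3" and g1 g2 g3 :: complex
  assumes "x \<noteq> 0"
  obtains l h1 h2 h3 where "g1 = h1 + l * cnj (x$1)" "g2 = h2 + l * cnj (x$2)" "g3 = h3 + l * cnj (x$3)"
    and "x$1 * h1 + x$2 * h2 + x$3 * h3 = 0"
proof -
  define R where "R = (norm x)^2"
  have "R > 0" using \<open>x \<noteq> 0\<close> by (simp add: R_def)
  have xx: "x$1 * cnj (x$1) + x$2 * cnj (x$2) + x$3 * cnj (x$3) = of_real R"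
    unfolding R_def norm_vec3_square by (simp only: complex_norm_square of_real_add)
  define l where "l = (g1 * x$1 + g2 * x$2 + g3 * x$3) / of_real R"
  have "x$1 * (g1 - l * cnj (x$1)) + x$2 * (g2 - l * cnj (x$2)) + x$3 * (g3 - l * cnj (x$3))
      = (g1 * x$1 + g2 * x$2 + g3 * x$3) - l * (x$1 * cnj (x$1) + x$2 * cnj (x$2) + x$3 * cnj (x$3))"
    by (simp add: algebra_simps)
  with \<open>R > 0\<close> have "x$1 * (g1 - l * cnj (x$1)) + x$2 * (g2 - l * cnj (x$2)) + x$3 * (g3 - l * cnj (x$3)) = 0"
    by (simp add: xx l_def)
  then show thesis
    by (intro that[of "g1 - l * cnj (x$1)" l "g2 - l * cnj (x$2)" "g3 - l * cnj (x$3)"]) simp_all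
qed

lemma transversal_at_if_gradient_not_parallel:
  fixes f :: "complex^3 \<Rightarrow> complex" and g1 g2 g3 :: complex
  assumes deriv: "(f has_derivative (\<lambda>v. g1 * v$1 + g2 * v$2 + g3 * v$3)) (at x)"
    and "x \<noteq> 0"
    and not_parallel: "\<nexists>l. g1 = l * cnj (x$1) \<and> g2 = l * cnj (x$2) \<and> g3 = l * cnj (x$3)"
  shows "transversal_at f x"
  unfolding transversal_at_def
proof (rule exI, intro conjI allI)
  show "(f has_derivative (\<lambda>v. g1 * v$1 + g2 * v$2 + g3 * v$3)) (at x)" by (fact deriv)
  fix w :: complex and c :: real
  obtain l h1 h2 h3 where g: "g1 = h1 + l * cnj (x$1)" "g2 = h2 + l * cnj (x$2)" "g3 = h3 + l * cnj (x$3)"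
    and xh: "x$1 * h1 + x$2 * h2 + x$3 * h3 = 0"
    using decompose_along_conj[OF \<open>x \<noteq> 0\<close>] .
  \<comment> \<open>\<open>h \<noteq> 0\<close> is orthogonal to \<open>cnj x\<close>, so \<open>v = \<alpha> cnj h + \<beta> x\<close> with real \<open>\<beta>\<close> decouples the
    two equations.\<close>
  define R where "R = (norm x)^2"
  have "R > 0" using \<open>x \<noteq> 0\<close> by (simp add: R_def)
  have xx: "x$1 * cnj (x$1) + x$2 * cnj (x$2) + x$3 * cnj (x$3) = of_real R"
    unfolding R_def norm_vec3_square by (simp only: complex_norm_square of_real_add)
  define H where "H = (cmod h1)^2 + (cmod h2)^2 + (cmod h3)^2"
  have "H > 0"
  proof -
    have "h1 \<noteq> 0 \<or> h2 \<noteq> 0 \<or> h3 \<noteq> 0" using not_parallel g by auto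
    then have "(cmod h1)^2 > 0 \<or> (cmod h2)^2 > 0 \<or> (cmod h3)^2 > 0" by auto
    then show ?thesis unfolding H_def
      using zero_le_power2[of "cmod h1"] zero_le_power2[of "cmod h2"] zero_le_power2[of "cmod h3"]
      by linarith
  qed
  have gh: "g1 * cnj h1 + g2 * cnj h2 + g3 * cnj h3 = of_real H"
  proof -
    have "g1 * cnj h1 + g2 * cnj h2 + g3 * cnj h3
       = (h1 * cnj h1 + h2 * cnj h2 + h3 * cnj h3) + l * cnj (x$1 * h1 + x$2 * h2 + x$3 * h3)"
      by (simp add: g algebra_simps)
    moreover have "h1 * cnj h1 + h2 * cnj h2 + h3 * cnj h3 = of_real H"
      unfolding H_def by (simp only: complex_norm_square of_real_add)
    ultimately show ?thesis by (simp add: xh)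
  qed
  define G where "G = g1 * x$1 + g2 * x$2 + g3 * x$3"
  define \<beta> where "\<beta> = c / R"
  define \<alpha> where "\<alpha> = (w - of_real \<beta> * G) / of_real H"
  define v :: "complex^3" where "v = vector [\<alpha> * cnj h1 + of_real \<beta> * x$1,
    \<alpha> * cnj h2 + of_real \<beta> * x$2, \<alpha> * cnj h3 + of_real \<beta> * x$3]"
  show "\<exists>v. g1 * v$1 + g2 * v$2 + g3 * v$3 = w \<and> inner x v = c"
  proof (intro exI conjI)
    have "g1 * v$1 + g2 * v$2 + g3 * v$3
        = \<alpha> * (g1 * cnj h1 + g2 * cnj h2 + g3 * cnj h3) + of_real \<beta> * G"
      by (simp add: v_def G_def algebra_simps)
    with \<open>H > 0\<close> show "g1 * v$1 + g2 * v$2 + g3 * v$3 = w" by (simp add: gh \<alpha>_def)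
    have "inner x v = Re (\<alpha> * cnj (x$1 * h1 + x$2 * h2 + x$3 * h3)
        + of_real \<beta> * (x$1 * cnj (x$1) + x$2 * cnj (x$2) + x$3 * cnj (x$3)))"
      unfolding inner_vec3 by (simp add: v_def algebra_simps)
    with \<open>R > 0\<close> show "inner x v = c" by (simp add: xh xx \<beta>_def)
  qed
qed

definition tpqr :: "nat \<Rightarrow> nat \<Rightarrow> nat \<Rightarrow> real \<Rightarrow> complex^3 \<Rightarrow> complex" where
  "tpqr p q r a = (\<lambda>x. (x$1)^p + (x$2)^q + (x$3)^r + complex_of_real a * (x$1) * (x$2) * (x$3))"

lemma tpqr_has_derivative:
  "(tpqr p q r a has_derivative
    (\<lambda>v. (of_nat p * (x$1)^(p-1) + complex_of_real a * x$2 * x$3) * v$1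
        + (of_nat q * (x$2)^(q-1) + complex_of_real a * x$1 * x$3) * v$2
        + (of_nat r * (x$3)^(r-1) + complex_of_real a * x$1 * x$2) * v$3)) (at x)"
  unfolding tpqr_def
  by (rule derivative_eq_intros bounded_linear_imp_has_derivative[OF bounded_linear_vec_nth] refl)+
     (simp add: algebra_simps)

lemma tpqr_transversal_at:
  assumes "x \<noteq> 0"
    and "\<And>l. of_nat p * (x$1)^(p-1) + of_real a * x$2 * x$3 = l * cnj (x$1) \<Longrightarrow>
             of_nat q * (x$2)^(q-1) + of_real a * x$1 * x$3 = l * cnj (x$2) \<Longrightarrow>
             of_nat r * (x$3)^(r-1) + of_real a * x$1 * x$2 = l * cnj (x$3) \<Longrightarrow> False"
  shows "transversal_at (tpqr p q r a) x"
  by (rule transversal_at_if_gradient_not_parallel[OF tpqr_has_derivative]) (use assms in blast)+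

lemma lagrange_eq_times_coordinate:
  fixes z c l :: complex
  assumes "p > 0" and "of_nat p * z^(p-1) + c = l * cnj z"
  shows "of_nat p * z^p + z * c = l * of_real ((cmod z)^2)"
proof -
  have "of_nat p * z^p + z * c = z * (of_nat p * z^(p-1) + c)"
    using \<open>p > 0\<close> by (cases p) (simp_all add: algebra_simps)
  also have "\<dots> = l * (z * cnj z)" unfolding assms(2) by (simp add: algebra_simps)
  finally show ?thesis by (simp only: complex_norm_square)
qed

lemma lagrange_system_times_coordinates:
  fixes x1 x2 x3 l :: complex
  assumes "p > 0" "q > 0" "r > 0"
    and "of_nat p * x1^(p-1) + of_real a * x2 * x3 = l * cnj x1"
    and "of_nat q * x2^(q-1) + of_real a * x1 * x3 = l * cnj x2"
    and "of_nat r * x3^(r-1) + of_real a * x1 * x2 = l * cnj x3"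
  shows "of_nat p * x1^p + of_real a * x1 * x2 * x3 = l * of_real ((cmod x1)^2)"
    and "of_nat q * x2^q + of_real a * x1 * x2 * x3 = l * of_real ((cmod x2)^2)"
    and "of_nat r * x3^r + of_real a * x1 * x2 * x3 = l * of_real ((cmod x3)^2)"
  using lagrange_eq_times_coordinate[OF assms(1,4)] lagrange_eq_times_coordinate[OF assms(2,5)]
    lagrange_eq_times_coordinate[OF assms(3,6)]
  by (simp_all add: ac_simps)

lemma lagrange_point_two_coordinates_vanish:
  fixes x1 x2 x3 l :: complex
  assumes "p \<ge> 2" "q \<ge> 2" "r \<ge> 2" "a \<noteq> 0"
    and "of_nat p * x1^(p-1) + of_real a * x2 * x3 = l * cnj x1"
    and "of_nat q * x2^(q-1) + of_real a * x1 * x3 = l * cnj x2"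
    and "of_nat r * x3^(r-1) + of_real a * x1 * x2 = l * cnj x3"
    and "x1 = 0 \<or> x2 = 0 \<or> x3 = 0"
  shows "(x2 = 0 \<and> x3 = 0) \<or> (x1 = 0 \<and> x3 = 0) \<or> (x1 = 0 \<and> x2 = 0)"
  using assms by (auto simp: zero_power)

lemma weighted_euler_identity:
  fixes x1 x2 x3 l u :: complex and p1 p2 p3 :: nat
  assumes p: "p1 > 0" "p2 > 0" "p3 > 0"
    and E1: "of_nat p1 * x1^p1 + u = l * of_real ((cmod x1)^2)"
    and E2: "of_nat p2 * x2^p2 + u = l * of_real ((cmod x2)^2)"
    and E3: "of_nat p3 * x3^p3 + u = l * of_real ((cmod x3)^2)"
  shows "x1^p1 + x2^p2 + x3^p3 + u
    = l * of_real ((cmod x1)^2 / p1 + (cmod x2)^2 / p2 + (cmod x3)^2 / p3)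
      + u * of_real (1 - (1 / p1 + 1 / p2 + 1 / p3))"
proof -
  have e: "x1^p1 = (l * of_real ((cmod x1)^2) - u) / of_nat p1"
       "x2^p2 = (l * of_real ((cmod x2)^2) - u) / of_nat p2"
       "x3^p3 = (l * of_real ((cmod x3)^2) - u) / of_nat p3"
    using E1 E2 E3 p by (simp_all add: field_simps)
  show ?thesis unfolding e using p by (simp add: field_simps)
qed

lemma powers_not_all_above_product:
  fixes r1 r2 r3 c :: real and p1 p2 p3 :: nat
  assumes r: "r1 > 0" "r2 > 0" "r3 > 0" and w: "r1 * r2 * r3 \<le> 1" and c: "c \<ge> 1"
    and p: "p1 > 0" "p2 > 0" "p3 > 0" and S: "1 / p1 + 1 / p2 + 1 / p3 \<le> 1"
  shows "\<not> (r1 ^ p1 > c * (r1 * r2 * r3) \<and> r2 ^ p2 > c * (r1 * r2 * r3) \<and> r3 ^ p3 > c * (r1 * r2 * r3))"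
proof
  \<comment> \<open>Raise the \<open>i\<close>-th inequality to the power \<open>P / p\<^sub>i\<close> and multiply: \<open>w\<^sup>P > (c w)\<^sup>N\<close>
    with \<open>N = P (1/p\<^sub>1 + 1/p\<^sub>2 + 1/p\<^sub>3) \<le> P\<close>, which is impossible for \<open>w \<le> 1 \<le> c\<close>.\<close>
  define w where "w = r1 * r2 * r3"
  define P where "P = p1 * p2 * p3"
  define N where "N = p2 * p3 + p1 * p3 + p1 * p2"
  assume "r1 ^ p1 > c * (r1 * r2 * r3) \<and> r2 ^ p2 > c * (r1 * r2 * r3) \<and> r3 ^ p3 > c * (r1 * r2 * r3)"
  then have h: "c * w < r1 ^ p1" "c * w < r2 ^ p2" "c * w < r3 ^ p3" by (simp_all add: w_def)
  have "w > 0" using r by (simp add: w_def)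
  have "real N = real P * (1 / p1 + 1 / p2 + 1 / p3)"
    using p by (simp add: P_def N_def field_simps)
  also have "\<dots> \<le> real P" using S by (simp add: mult_left_le)
  finally have "N \<le> P" by simp
  have raise: "(c * w) ^ k < s ^ (m * k)" if "c * w < s ^ m" "k > 0" for s :: real and m k
    unfolding power_mult using that \<open>w > 0\<close> c by (intro power_strict_mono) auto
  have "(c * w) ^ N = (c * w) ^ (p2 * p3) * (c * w) ^ (p1 * p3) * (c * w) ^ (p1 * p2)"
    by (simp add: N_def power_add)
  also have "\<dots> < r1 ^ (p1 * (p2 * p3)) * r2 ^ (p2 * (p1 * p3)) * r3 ^ (p3 * (p1 * p2))"
    using raise[OF h(1)] raise[OF h(2)] raise[OF h(3)] p r \<open>w > 0\<close> c
    by (intro mult_strict_mono) auto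
  also have "\<dots> = w ^ P"
    by (simp add: w_def P_def power_mult_distrib ac_simps)
  also have "\<dots> \<le> w ^ N" using \<open>N \<le> P\<close> \<open>w > 0\<close> w by (intro power_decreasing) (auto simp: w_def)
  also have "\<dots> \<le> (c * w) ^ N" using \<open>w > 0\<close> c by (intro power_mono) auto
  finally show False by simp
qed

lemma norm_coupling_le_monomial:
  fixes z l u :: complex and S T :: real
  assumes T: "T > 0" and S: "S \<le> 1" and lT: "l * of_real T = - u * of_real (1 - S)"
    and E: "of_nat p * z^p + u = l * of_real ((cmod z)^2)"
  shows "cmod u \<le> p * cmod z ^ p"
proof -
  have E': "of_nat p * z^p = l * of_real ((cmod z)^2) - u" using E by (simp add: eq_diff_eq)
  have "of_real T * (of_nat p * z^p) = (l * of_real T) * of_real ((cmod z)^2) - u * of_real T"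
    unfolding E' by (simp add: algebra_simps)
  also have "\<dots> = - u * of_real ((1 - S) * (cmod z)^2 + T)"
    unfolding lT by (simp add: algebra_simps)
  finally have "cmod (of_real T * (of_nat p * z^p)) = cmod (u * of_real ((1 - S) * (cmod z)^2 + T))"
    by (simp only: mult_minus_left norm_minus_cancel)
  moreover have "(1 - S) * (cmod z)^2 + T > 0" using T S by (simp add: add_nonneg_pos)
  ultimately have "T * (p * cmod z ^ p) = cmod u * ((1 - S) * (cmod z)^2 + T)"
    using T by (simp only: norm_mult norm_power norm_of_real norm_of_nat abs_of_pos)
  also have "\<dots> \<ge> cmod u * T" using S by (intro mult_left_mono) auto
  finally show ?thesis using T by (simp add: mult.commute)
qed

lemma no_lagrange_point_on_zero_level:
  fixes x1 x2 x3 l u :: complex and a M :: real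
  assumes p: "p1 > 0" "p2 > 0" "p3 > 0" and S: "1 / p1 + 1 / p2 + 1 / p3 \<le> 1"
    and M: "real p1 \<le> M" "real p2 \<le> M" "real p3 \<le> M" and a: "a > 12 * M"
    and nz: "x1 \<noteq> 0" "x2 \<noteq> 0" "x3 \<noteq> 0" and u: "u = of_real a * x1 * x2 * x3"
    and E1: "of_nat p1 * x1^p1 + u = l * of_real ((cmod x1)^2)"
    and E2: "of_nat p2 * x2^p2 + u = l * of_real ((cmod x2)^2)"
    and E3: "of_nat p3 * x3^p3 + u = l * of_real ((cmod x3)^2)"
    and zero: "x1^p1 + x2^p2 + x3^p3 + u = 0"
    and w1: "cmod x1 * cmod x2 * cmod x3 \<le> 1"
  shows False
proof -
  define T where "T = (cmod x1)^2 / p1 + (cmod x2)^2 / p2 + (cmod x3)^2 / p3"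
  have "T > 0" using nz p unfolding T_def by (intro add_pos_pos divide_pos_pos) auto
  have "l * of_real T = - u * of_real (1 - (1 / p1 + 1 / p2 + 1 / p3))"
    using weighted_euler_identity[OF p E1 E2 E3] zero by (simp add: T_def eq_neg_iff_add_eq_0)
  note coupling_le = norm_coupling_le_monomial[OF \<open>T > 0\<close> S this]
  define w where "w = cmod x1 * cmod x2 * cmod x3"
  have "w > 0" using nz by (simp add: w_def)
  have "cmod u = a * w" using a M p by (simp add: u w_def norm_mult)
  have above: "12 * w < s ^ k" if "cmod u \<le> k * s ^ k" "real k \<le> M" "s \<ge> 0" for s :: real and k
  proof -
    have "M * (12 * w) < a * w" using a \<open>w > 0\<close> by simp
    also have "\<dots> \<le> M * s ^ k"
      using that \<open>cmod u = a * w\<close> by (metis mult_right_mono order_trans zero_le_power)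
    finally show ?thesis using M p by (simp add: mult_less_cancel_left_pos)
  qed
  show False
    using powers_not_all_above_product[of "cmod x1" "cmod x2" "cmod x3" 12 p1 p2 p3]
      above[OF coupling_le[OF E1] M(1)] above[OF coupling_le[OF E2] M(2)]
      above[OF coupling_le[OF E3] M(3)] nz w1 p S
    by (simp add: w_def)
qed

lemma moduli_le_one_of_unit_sum_squares:
  fixes x1 x2 x3 :: complex
  assumes "(cmod x1)^2 + (cmod x2)^2 + (cmod x3)^2 = 1"
  shows "cmod x1 \<le> 1" "cmod x2 \<le> 1" "cmod x3 \<le> 1"
proof -
  have "(cmod x1)^2 \<le> 1" "(cmod x2)^2 \<le> 1" "(cmod x3)^2 \<le> 1"
    using assms zero_le_power2[of "cmod x1"] zero_le_power2[of "cmod x2"] zero_le_power2[of "cmod x3"]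
    by linarith+
  then show "cmod x1 \<le> 1" "cmod x2 \<le> 1" "cmod x3 \<le> 1"
    by (simp_all add: abs_square_le_1)
qed

lemma lagrange_residual_le:
  fixes z l u :: complex
  assumes "p \<ge> 2" "real p \<le> M" "cmod z \<le> 1"
    and E: "of_nat p * z^p + u = l * of_real ((cmod z)^2)"
  shows "cmod (l * of_real ((cmod z)^2) - u) \<le> M * (cmod z)^2"
proof -
  have "l * of_real ((cmod z)^2) - u = of_nat p * z^p" using E by (metis add_diff_cancel_right')
  then have "cmod (l * of_real ((cmod z)^2) - u) = p * cmod z ^ p" by (simp add: norm_mult norm_power)
  also have "\<dots> \<le> p * (cmod z)^2" using assms by (intro mult_left_mono power_decreasing) auto
  also have "\<dots> \<le> M * (cmod z)^2" using assms by (intro mult_right_mono) auto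
  finally show ?thesis .
qed

lemma norm_times_gap_le_of_residuals:
  fixes l u :: complex and s t M :: real
  assumes "cmod (l * of_real s - u) \<le> M * s" "cmod (l * of_real t - u) \<le> M * t"
    and "s \<ge> 0" "t \<ge> 0"
  shows "cmod u * \<bar>s - t\<bar> \<le> 2 * M * s * t"
proof -
  have "u * of_real (s - t) = (l * of_real s - u) * of_real t - (l * of_real t - u) * of_real s"
    by (simp add: algebra_simps)
  then have "cmod u * \<bar>s - t\<bar> = cmod ((l * of_real s - u) * of_real t - (l * of_real t - u) * of_real s)"
    by (metis (no_types, lifting) norm_mult norm_of_real)
  also have "\<dots> \<le> cmod (l * of_real s - u) * t + cmod (l * of_real t - u) * s"
    using assms(3,4) by (metis (no_types, lifting) abs_of_nonneg norm_mult norm_of_real norm_triangle_ineq4)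
  also have "\<dots> \<le> M * s * t + M * t * s"
    using assms by (intro add_mono mult_right_mono) auto
  finally show ?thesis by (simp add: algebra_simps)
qed

lemma square_gap_lt_sixth:
  fixes l u :: complex and a M s t :: real
  assumes "cmod (l * of_real (s^2) - u) \<le> M * s^2" "cmod (l * of_real (t^2) - u) \<le> M * t^2"
    and "0 < t" "t \<le> s" "s \<le> 1"
    and coupling: "a * s * t * t \<le> cmod u" and a: "a > 12 * M" and "M > 0"
  shows "s^2 - t^2 < 1/6"
proof -
  have "0 < s" "t^2 \<le> s^2" using assms(3-5) by (auto intro: power_mono)
  have "a * s * t * t * (s^2 - t^2) \<le> cmod u * \<bar>s^2 - t^2\<bar>"
    using coupling \<open>t^2 \<le> s^2\<close> by (simp add: mult_right_mono)
  also have "\<dots> \<le> 2 * M * s^2 * t^2"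
    using assms(1,2) by (rule norm_times_gap_le_of_residuals) auto
  finally have "(s * t * t) * (a * (s^2 - t^2)) \<le> (s * t * t) * (2 * M * s)"
    by (simp add: power2_eq_square mult_ac)
  then have "a * (s^2 - t^2) \<le> 2 * M * s"
    using \<open>0 < s\<close> \<open>0 < t\<close> by (simp add: mult_le_cancel_left_pos)
  also have "\<dots> \<le> 2 * M" using \<open>s \<le> 1\<close> \<open>M > 0\<close> by simp
  also have "\<dots> < a * (1/6)" using a by simp
  finally show ?thesis using a \<open>M > 0\<close> by (simp add: mult_less_cancel_left_pos)
qed

lemma smallest_modulus_gt_third:
  fixes x1 x2 x3 l u :: complex and a M :: real
  assumes p: "p1 \<ge> 2" "p2 \<ge> 2" "p3 \<ge> 2"
    and M: "real p1 \<le> M" "real p2 \<le> M" "real p3 \<le> M" and a: "a > 12 * M"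
    and "x3 \<noteq> 0" and u: "u = of_real a * x1 * x2 * x3"
    and E1: "of_nat p1 * x1^p1 + u = l * of_real ((cmod x1)^2)"
    and E2: "of_nat p2 * x2^p2 + u = l * of_real ((cmod x2)^2)"
    and E3: "of_nat p3 * x3^p3 + u = l * of_real ((cmod x3)^2)"
    and sq: "(cmod x1)^2 + (cmod x2)^2 + (cmod x3)^2 = 1"
    and min: "cmod x3 \<le> cmod x1" "cmod x3 \<le> cmod x2"
  shows "cmod x3 > 1/3"
proof -
  have "M > 0" "a > 0" using p M a by linarith+
  note le1 = moduli_le_one_of_unit_sum_squares[OF sq]
  note residual = lagrange_residual_le[OF p(1) M(1) le1(1) E1]
    lagrange_residual_le[OF p(2) M(2) le1(2) E2]
    lagrange_residual_le[OF p(3) M(3) le1(3) E3]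
  have cu: "cmod u = a * cmod x1 * cmod x2 * cmod x3" using \<open>a > 0\<close> by (simp add: u norm_mult)
  have "(a * cmod x1 * cmod x3) * cmod x3 \<le> (a * cmod x1 * cmod x3) * cmod x2"
    "(a * cmod x2 * cmod x3) * cmod x3 \<le> (a * cmod x2 * cmod x3) * cmod x1"
    using min \<open>a > 0\<close> by (intro mult_left_mono; simp)+
  then have "a * cmod x1 * cmod x3 * cmod x3 \<le> cmod u" "a * cmod x2 * cmod x3 * cmod x3 \<le> cmod u"
    unfolding cu by (simp_all add: mult_ac)
  note coupling = this
  have "(cmod x1)^2 - (cmod x3)^2 < 1/6"
    by (rule square_gap_lt_sixth[OF residual(1) residual(3) _ _ _ coupling(1) a \<open>M > 0\<close>])
       (use min \<open>x3 \<noteq> 0\<close> le1 in auto)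
  moreover have "(cmod x2)^2 - (cmod x3)^2 < 1/6"
    by (rule square_gap_lt_sixth[OF residual(2) residual(3) _ _ _ coupling(2) a \<open>M > 0\<close>])
       (use min \<open>x3 \<noteq> 0\<close> le1 in auto)
  ultimately have "(1/3)^2 < (cmod x3)^2" using sq by (simp add: power2_eq_square)
  then show ?thesis by (rule power2_less_imp_less) simp
qed

lemma inverse_le_weighted_sum:
  fixes s1 s2 s3 p1 p2 p3 M :: real
  assumes "s1 + s2 + s3 = 1" "s1 \<ge> 0" "s2 \<ge> 0" "s3 \<ge> 0"
    and "0 < p1" "0 < p2" "0 < p3" "p1 \<le> M" "p2 \<le> M" "p3 \<le> M"
  shows "1 / M \<le> s1 / p1 + s2 / p2 + s3 / p3"
proof -
  have "s1 / M + s2 / M + s3 / M \<le> s1 / p1 + s2 / p2 + s3 / p3"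
    using assms by (intro add_mono divide_left_mono) auto
  then show ?thesis using assms(1) by (simp add: add_divide_distrib[symmetric])
qed

lemma value_lower_bound_of_residual:
  fixes f l u :: complex and S T M a r :: real
  assumes fid: "f = l * of_real T + u * of_real (1 - S)" and "S \<le> 1" "T > 0" "r > 0"
    and residual: "cmod (l * of_real (r^2) - u) \<le> M * r^2"
    and coupling: "a * r * r^2 \<le> cmod u"
  shows "T * (a * r - M) \<le> cmod f"
proof -
  define A where "A = l * of_real (r^2) - u"
  define K where "K = T + (1 - S) * r^2"
  have "K \<ge> T" using \<open>S \<le> 1\<close> by (simp add: K_def)
  \<comment> \<open>Eliminate \<open>l\<close> between \<open>f = l T + (1 - S) u\<close> and \<open>l r\<^sup>2 = u + A\<close>.\<close>
  have "of_real (r^2) * f = u * of_real K + A * of_real T"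
    unfolding fid A_def K_def by (simp add: algebra_simps)
  then have "r^2 * cmod f = cmod (u * of_real K + A * of_real T)"
    by (metis abs_of_nonneg norm_mult norm_of_real zero_le_power2)
  moreover have "cmod u * K - cmod A * T \<le> cmod (u * of_real K + A * of_real T)"
    using norm_diff_ineq[of "u * of_real K" "A * of_real T"] \<open>K \<ge> T\<close> \<open>T > 0\<close>
    by (simp add: norm_mult)
  moreover have "a * r * r^2 * T \<le> cmod u * K"
    using coupling \<open>K \<ge> T\<close> \<open>T > 0\<close> by (intro mult_mono) auto
  moreover have "cmod A * T \<le> M * r^2 * T" using residual \<open>T > 0\<close> by (simp add: A_def)
  ultimately have "r^2 * (T * (a * r - M)) \<le> r^2 * cmod f" by (simp add: algebra_simps)
  then show ?thesis using \<open>r > 0\<close> by simp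
qed

lemma lagrange_value_ge_three:
  fixes x1 x2 x3 l u :: complex and a M :: real
  assumes p: "p1 \<ge> 2" "p2 \<ge> 2" "p3 \<ge> 2" and S: "1 / p1 + 1 / p2 + 1 / p3 \<le> 1"
    and M: "real p1 \<le> M" "real p2 \<le> M" "real p3 \<le> M" and a: "a > 12 * M"
    and "x3 \<noteq> 0" and u: "u = of_real a * x1 * x2 * x3"
    and E1: "of_nat p1 * x1^p1 + u = l * of_real ((cmod x1)^2)"
    and E2: "of_nat p2 * x2^p2 + u = l * of_real ((cmod x2)^2)"
    and E3: "of_nat p3 * x3^p3 + u = l * of_real ((cmod x3)^2)"
    and sq: "(cmod x1)^2 + (cmod x2)^2 + (cmod x3)^2 = 1"
    and min: "cmod x3 \<le> cmod x1" "cmod x3 \<le> cmod x2"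
  shows "3 \<le> cmod (x1^p1 + x2^p2 + x3^p3 + u)"
proof -
  define r where "r = cmod x3"
  define T where "T = (cmod x1)^2 / p1 + (cmod x2)^2 / p2 + (cmod x3)^2 / p3"
  have "M > 0" "a > 0" using p M a by linarith+
  have "r > 1/3" unfolding r_def by (rule smallest_modulus_gt_third) fact+
  have "T \<ge> 1 / M" unfolding T_def
    by (rule inverse_le_weighted_sum[OF sq zero_le_power2 zero_le_power2 zero_le_power2 _ _ _ M])
       (use p in auto)
  then have "T > 0" using \<open>M > 0\<close> by (smt (verit) divide_pos_pos)
  have "a * r * r^2 \<le> cmod u"
  proof -
    have "r * r \<le> cmod x1 * cmod x2" using min by (intro mult_mono) (auto simp: r_def)
    then have "a * (r * r * r) \<le> a * (cmod x1 * cmod x2 * r)"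
      using \<open>a > 0\<close> by (intro mult_left_mono mult_right_mono) (auto simp: r_def)
    then show ?thesis using \<open>a > 0\<close> by (simp add: u r_def norm_mult power2_eq_square mult_ac)
  qed
  have "T * (a * r - M) \<le> cmod (x1^p1 + x2^p2 + x3^p3 + u)"
  proof (rule value_lower_bound_of_residual[OF _ S \<open>T > 0\<close> _ _ \<open>a * r * r^2 \<le> cmod u\<close>])
    show "x1^p1 + x2^p2 + x3^p3 + u = l * of_real T + u * of_real (1 - (1 / p1 + 1 / p2 + 1 / p3))"
      using weighted_euler_identity[OF _ _ _ E1 E2 E3] p by (simp add: T_def)
    show "cmod (l * of_real (r^2) - u) \<le> M * r^2" unfolding r_def
      by (rule lagrange_residual_le[OF p(3) M(3) moduli_le_one_of_unit_sum_squares(3)[OF sq] E3])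
  qed (use \<open>r > 1/3\<close> in simp)
  moreover have "3 * M \<le> a * r - M"
    using mult_left_mono[of "1/3" r a] \<open>r > 1/3\<close> \<open>a > 0\<close> a by linarith
  then have "(1 / M) * (3 * M) \<le> T * (a * r - M)"
    using \<open>T \<ge> 1 / M\<close> \<open>M > 0\<close> \<open>T > 0\<close> by (intro mult_mono) auto
  ultimately show ?thesis using \<open>M > 0\<close> by simp
qed

lemma lagrange_point_on_unit_sphere:
  fixes x1 x2 x3 l :: complex and a M :: real
  assumes p: "p \<ge> 2" "q \<ge> 2" "r \<ge> 2" and S: "1 / p + 1 / q + 1 / r \<le> 1"
    and M: "real p \<le> M" "real q \<le> M" "real r \<le> M" and a: "a > 12 * M"
    and G1: "of_nat p * x1^(p-1) + of_real a * x2 * x3 = l * cnj x1"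
    and G2: "of_nat q * x2^(q-1) + of_real a * x1 * x3 = l * cnj x2"
    and G3: "of_nat r * x3^(r-1) + of_real a * x1 * x2 = l * cnj x3"
    and sq: "(cmod x1)^2 + (cmod x2)^2 + (cmod x3)^2 = 1"
  shows "1 \<le> cmod (x1^p + x2^q + x3^r + of_real a * x1 * x2 * x3)"
proof (cases "x1 = 0 \<or> x2 = 0 \<or> x3 = 0")
  case True
  have "a \<noteq> 0" using p M a by linarith
  have unit: "cmod (z ^ k) = 1" if "(cmod z)^2 = 1" for z :: complex and k
    using that by (simp add: norm_power abs_square_eq_1)
  from lagrange_point_two_coordinates_vanish[OF p \<open>a \<noteq> 0\<close> G1 G2 G3 True]
  show ?thesis using sq p by (auto simp: unit zero_power)
next
  case False
  define u where "u = of_real a * x1 * x2 * x3"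
  have "p > 0" "q > 0" "r > 0" using p by simp_all
  note E = lagrange_system_times_coordinates[OF this G1 G2 G3, folded u_def]
  consider "cmod x3 \<le> cmod x1" "cmod x3 \<le> cmod x2" | "cmod x1 \<le> cmod x2" "cmod x1 \<le> cmod x3"
    | "cmod x2 \<le> cmod x1" "cmod x2 \<le> cmod x3" by linarith
  then have "3 \<le> cmod (x1^p + x2^q + x3^r + u)"
  proof cases
    case 1
    then show ?thesis using False
      by (intro lagrange_value_ge_three[OF p S M a _ u_def E sq]) auto
  next
    case 2
    have "3 \<le> cmod (x2^q + x3^r + x1^p + u)"
      by (rule lagrange_value_ge_three[OF p(2,3,1) _ M(2,3,1) a _ _ E(2,3,1)])
         (use 2 False S sq in \<open>auto simp: u_def ac_simps\<close>)
    then show ?thesis by (simp add: ac_simps)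
  next
    case 3
    have "3 \<le> cmod (x1^p + x3^r + x2^q + u)"
      by (rule lagrange_value_ge_three[OF p(1,3,2) _ M(1,3,2) a _ _ E(1,3,2)])
         (use 3 False S sq in \<open>auto simp: u_def ac_simps\<close>)
    then show ?thesis by (simp add: ac_simps)
  qed
  then show ?thesis by (simp add: u_def)
qed

lemma lagrange_point_off_zero_level:
  fixes x1 x2 x3 l :: complex and a M :: real
  assumes p: "p \<ge> 2" "q \<ge> 2" "r \<ge> 2" and S: "1 / p + 1 / q + 1 / r \<le> 1"
    and M: "real p \<le> M" "real q \<le> M" "real r \<le> M" and a: "a > 12 * M"
    and G1: "of_nat p * x1^(p-1) + of_real a * x2 * x3 = l * cnj x1"
    and G2: "of_nat q * x2^(q-1) + of_real a * x1 * x3 = l * cnj x2"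
    and G3: "of_nat r * x3^(r-1) + of_real a * x1 * x2 = l * cnj x3"
    and sq: "0 < (cmod x1)^2 + (cmod x2)^2 + (cmod x3)^2" "(cmod x1)^2 + (cmod x2)^2 + (cmod x3)^2 \<le> 36/25"
  shows "x1^p + x2^q + x3^r + of_real a * x1 * x2 * x3 \<noteq> 0"
proof (cases "x1 = 0 \<or> x2 = 0 \<or> x3 = 0")
  case True
  have "a \<noteq> 0" using p M a by linarith
  from lagrange_point_two_coordinates_vanish[OF p \<open>a \<noteq> 0\<close> G1 G2 G3 True]
  show ?thesis using sq(1) p by (auto simp: zero_power)
next
  case False
  define u where "u = of_real a * x1 * x2 * x3"
  have "p > 0" "q > 0" "r > 0" using p by simp_all
  note E = lagrange_system_times_coordinates[OF this G1 G2 G3, folded u_def]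
  have "(cmod x3)^2 \<le> 36/25"
    using sq(2) zero_le_power2[of "cmod x1"] zero_le_power2[of "cmod x2"] by linarith
  then have "cmod x3 \<le> 6/5" using power2_le_imp_le[of "cmod x3" "6/5"] by (simp add: power_divide)
  have "2 * (cmod x1 * cmod x2) \<le> (cmod x1)^2 + (cmod x2)^2"
    using sum_squares_bound[of "cmod x1" "cmod x2"] by (simp add: mult.assoc)
  then have "cmod x1 * cmod x2 \<le> 18/25"
    using sq(2) zero_le_power2[of "cmod x3"] by linarith
  then have "cmod x1 * cmod x2 * cmod x3 \<le> 18/25 * (6/5)"
    using \<open>cmod x3 \<le> 6/5\<close> by (intro mult_mono) auto
  then show ?thesis
    using no_lagrange_point_on_zero_level[OF _ _ _ S M a _ _ _ u_def E] False p
    by (auto simp: u_def)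
qed

lemma tpqr_sphere_transverse_zero_level:
  fixes a M \<rho> :: real
  assumes p: "p \<ge> 2" "q \<ge> 2" "r \<ge> 2" and S: "1 / p + 1 / q + 1 / r \<le> 1"
    and M: "real p \<le> M" "real q \<le> M" "real r \<le> M" and a: "a > 12 * M"
    and "0 < \<rho>" "\<rho> \<le> 6/5"
  shows "sphere_transverse (tpqr p q r a) 0 \<rho>"
  unfolding sphere_transverse_def
proof
  fix x assume x: "x \<in> tpqr p q r a -` {0} \<inter> sphere 0 \<rho>"
  then have "x \<noteq> 0" using \<open>0 < \<rho>\<close> by auto
  have "(norm x)^2 \<le> (6/5)^2" using x \<open>0 < \<rho>\<close> \<open>\<rho> \<le> 6/5\<close> by (simp add: power_mono)
  then have sq: "0 < (cmod (x$1))^2 + (cmod (x$2))^2 + (cmod (x$3))^2"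
    "(cmod (x$1))^2 + (cmod (x$2))^2 + (cmod (x$3))^2 \<le> 36/25"
    using \<open>x \<noteq> 0\<close> by (simp_all add: norm_vec3_square[symmetric] power_divide)
  show "transversal_at (tpqr p q r a) x"
    by (rule tpqr_transversal_at[OF \<open>x \<noteq> 0\<close>])
       (use lagrange_point_off_zero_level[OF p S M a _ _ _ sq] x in \<open>auto simp: tpqr_def\<close>)
qed

lemma tpqr_sphere_transverse_unit_sphere:
  fixes a M :: real
  assumes p: "p \<ge> 2" "q \<ge> 2" "r \<ge> 2" and S: "1 / p + 1 / q + 1 / r \<le> 1"
    and M: "real p \<le> M" "real q \<le> M" "real r \<le> M" and a: "a > 12 * M"
    and "cmod s < 1"
  shows "sphere_transverse (tpqr p q r a) s 1"
  unfolding sphere_transverse_def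
proof
  fix x assume x: "x \<in> tpqr p q r a -` {s} \<inter> sphere 0 1"
  then have "x \<noteq> 0" by auto
  have sq: "(cmod (x$1))^2 + (cmod (x$2))^2 + (cmod (x$3))^2 = 1"
    using x by (simp add: norm_vec3_square[symmetric])
  show "transversal_at (tpqr p q r a) x"
    by (rule tpqr_transversal_at[OF \<open>x \<noteq> 0\<close>])
       (use lagrange_point_on_unit_sphere[OF p S M a _ _ _ sq] x \<open>cmod s < 1\<close> in \<open>auto simp: tpqr_def\<close>)
qed

lemma reciprocal_sum_le_one_imp_ge_two:
  fixes p q r :: nat
  assumes "p > 0" "q > 0" "r > 0" "1 / p + 1 / q + 1 / r \<le> 1"
  shows "p \<ge> 2"
proof (rule ccontr)
  assume "\<not> p \<ge> 2"
  with \<open>p > 0\<close> have "p = 1" by simp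
  with assms(4) have "1 / real q + 1 / real r \<le> 0" by simp
  moreover have "1 / real q + 1 / real r > 0" using \<open>q > 0\<close> \<open>r > 0\<close> by (simp add: add_pos_pos)
  ultimately show False by simp
qed

theorem lemma1p8:
  fixes p q r :: nat and a :: real and t :: complex
  assumes "p > 0" "q > 0" "r > 0"
    and "1 / real p + 1 / real q + 1 / real r \<le> 1"
    and "a > 12 * real (max p (max q r))"
    and "0 < cmod t" "cmod t < 1"
  shows "is_milnor_fiber
           (\<lambda>x::complex^3. (x$1)^p + (x$2)^q + (x$3)^r + complex_of_real a * (x$1) * (x$2) * (x$3))
           ((\<lambda>x::complex^3. (x$1)^p + (x$2)^q + (x$3)^r + complex_of_real a * (x$1) * (x$2) * (x$3)) -` {t}
              \<inter> cball 0 1)"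
proof -
  define M where "M = real (max p (max q r))"
  have M: "real p \<le> M" "real q \<le> M" "real r \<le> M" and a: "a > 12 * M"
    using assms(5) by (auto simp: M_def)
  note S = assms(4)
  have p: "p \<ge> 2" "q \<ge> 2" "r \<ge> 2"
    using reciprocal_sum_le_one_imp_ge_two[of p q r] reciprocal_sum_le_one_imp_ge_two[of q p r]
      reciprocal_sum_le_one_imp_ge_two[of r p q] assms(1-4) by (simp_all add: ac_simps)
  have "ereal (6/5) \<le> milnor_radius (tpqr p q r a)"
    by (rule milnor_radius_ge) (simp_all add: tpqr_sphere_transverse_zero_level[OF p S M a])
  then have "ereal 1 < milnor_radius (tpqr p q r a)"
    by (rule order.strict_trans2[rotated]) simp
  then have "is_milnor_fiber (tpqr p q r a) (tpqr p q r a -` {t} \<inter> cball 0 1)"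
    using assms(6,7)
    by (intro is_milnor_fiber_level_set) (auto intro: tpqr_sphere_transverse_unit_sphere[OF p S M a])
  then show ?thesis by (simp only: tpqr_def)
qed

end
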